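(* Each of the operators $\mathcal{S}$, $\widetilde{\mathcal{S}}$, $\mathcal{S}_{+\Delta}$, $\mathcal{S}_{-\Delta}$, $\widetilde{\mathcal{S}}_\Delta$, $\mathcal{T}^{(r,\pm)}_{rim}$, $\mathcal{S}^{(r,\pm)}_\Delta$, $\mathcal{T}^{(r,s)}_{rim}$, $\widetilde{\mathcal{T}}^{(r)}_{rim}$, $\widetilde{\mathcal{S}}^{(r)}_\Delta$ ($r,s\in\mathbb{N}$) defined below, mapping $\mathbb{D}$ into $\mathbb{D}$, is (a) Lipschitz with respect to $\|\cdot\|$, hence continuous in the $\|\cdot\|$ norm; and (b) $\Lambda$-compatible; consequently each of them is jointly $J_1$-continuous at every $x\in\mathbb{D}$.
   Context: $\mathbb{D}=\mathbb{D}([0,1],\mathbb{R})$ is the space of càdlàg functions on $[0,1]$ with the Skorokhod $J_1$-topology, $\|x\|=\sup_{0\le\tau\le1}|x(\tau)|$. $\Lambda$ is the set of continuous strictly increasing $\lambda:[0,1]\to[0,1]$ with $\lambda(0)=0,\lambda(1)=1$, and $I$ is the identity. $x_n\to x$ in $J_1$ means there are $\lambda_n\in\Lambda$ with $\|\lambda_n-I\|\vee\|x_n\circ\lambda_n-x\|\to0$. $\Psi:\mathbb{D}\to\mathbb{D}$ is $\Lambda$-compatible if $\Psi(x)\circ\lambda=\Psi(x\circ\lambda)$ for all $x\in\mathbb{D},\lambda\in\Lambda$; it is jointly $J_1$-continuous at $x$ if for every $x_n\to x$ in $J_1$ there exist $\lambda_n\in\Lambda$ with simultaneously $\|\lambda_n-I\|\to0$,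 $\|x_n\circ\lambda_n-x\|\to0$, $\|\Psi(x_n)\circ\lambda_n-\Psi(x)\|\to0$. For $x\in\mathbb{D}$ let $\Delta x(\tau)=x(\tau)-x(\tau-)$ for $\tau>0$ and $\Delta x(0)=0$. Define, for $\tau\in[0,1]$: (i) $\mathcal{S}(x)(\tau)=\sup_{0\le s\le\tau}x(s)$; (ii) $\widetilde{\mathcal{S}}(x)(\tau)=\sup_{0\le s\le\tau}|x(s)|$; (iii) $\mathcal{S}_{\pm\Delta}(x)(\tau)=\mathcal{S}_\Delta(\pm x)(\tau):=\sup_{0\le s\le\tau}\Delta(\pm x)(s)$; (iv) $\widetilde{\mathcal{S}}_\Delta(x)(\tau)=\sup_{0\le s\le\tau}|\Delta x(s)|$. (v) $\mathcal{T}^{(1,\pm)}_{rim}(x)=x\mp\mathcal{S}_{\pm\Delta}(x)$ and for $r\ge2$, $\mathcal{T}^{(r,\pm)}_{rim}(x)=\mathcal{T}^{(1,\pm)}_{rim}\circ\mathcal{T}^{(r-1,\pm)}_{rim}(x)$. (vi) $\mathcal{S}^{(1,\pm)}_\Delta(x)=\mathcal{S}_{\pm\Delta}(x)$ and for $r\ge2$, $\mathcal{S}^{(r,\pm)}_\Delta(x)=\mathcal{S}^{(1,\pm)}_\Delta\circ\mathcal{T}^{(r-1,\pm)}_{rim}(x)$. (vii) $\mathcal{T}^{(r,s)}_{rim}(x)=\mathcal{T}^{(r,+)}_{rim}\circ\mathcal{T}^{(s,-)}_{rim}(x)=\mathcal{T}^{(s,-)}_{rim}\circ\mathcal{T}^{(r,+)}_{rim}(x)$.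 (viii) $\widetilde{\mathcal{T}}^{(1)}_{rim}(x)=x-\widetilde{\mathcal{S}}_\Delta(x)$ and for $r\ge2$, $\widetilde{\mathcal{T}}^{(r)}_{rim}(x)=\widetilde{\mathcal{T}}^{(1)}_{rim}\circ\widetilde{\mathcal{T}}^{(r-1)}_{rim}(x)$. (ix) $\widetilde{\mathcal{S}}^{(1)}_\Delta(x)=\widetilde{\mathcal{S}}_\Delta(x)$ and for $r\ge2$, $\widetilde{\mathcal{S}}^{(r)}_\Delta(x)=\widetilde{\mathcal{S}}_\Delta\circ\widetilde{\mathcal{T}}^{(r-1)}_{rim}(x)$. *)

theory Defs
  imports "HOL-Analysis.Analysis"
begin

text \<open>Elements of the Skorokhod space D([0,1],R) are represented as functions
  real => real; only their values on [0,1] matter.\<close>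

definition cadlag :: "(real \<Rightarrow> real) \<Rightarrow> bool" where
  "cadlag x \<longleftrightarrow>
     (\<forall>t\<in>{0..<1}. (x \<longlongrightarrow> x t) (at_right t)) \<and>
     (\<forall>t\<in>{0<..1}. \<exists>l. (x \<longlongrightarrow> l) (at_left t))"

definition Dsp :: "(real \<Rightarrow> real) set" where
  "Dsp = {x. cadlag x}"

definition supn :: "(real \<Rightarrow> real) \<Rightarrow> real" where
  "supn x = (SUP t\<in>{0..1}. \<bar>x t\<bar>)"

definition Lambda_set :: "(real \<Rightarrow> real) set" where
  "Lambda_set = {l. continuous_on {0..1} l \<and> strict_mono_on {0..1} l \<and> l 0 = 0 \<and> l 1 = 1}"

definition J1_conv :: "(nat \<Rightarrow> real \<Rightarrow> real) \<Rightarrow> (real \<Rightarrow> real) \<Rightarrow> bool" where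
  "J1_conv xn x \<longleftrightarrow> (\<exists>ln. (\<forall>n. ln n \<in> Lambda_set) \<and>
      (\<lambda>n. supn (\<lambda>t. ln n t - t)) \<longlonglongrightarrow> 0 \<and>
      (\<lambda>n. supn (\<lambda>t. xn n (ln n t) - x t)) \<longlonglongrightarrow> 0)"

definition Lambda_compatible :: "((real \<Rightarrow> real) \<Rightarrow> (real \<Rightarrow> real)) \<Rightarrow> bool" where
  "Lambda_compatible \<Psi> \<longleftrightarrow>
     (\<forall>x\<in>Dsp. \<forall>l\<in>Lambda_set. \<forall>t\<in>{0..1}. \<Psi> x (l t) = \<Psi> (x \<circ> l) t)"

definition norm_Lipschitz :: "((real \<Rightarrow> real) \<Rightarrow> (real \<Rightarrow> real)) \<Rightarrow> bool" where
  "norm_Lipschitz \<Psi> \<longleftrightarrow> (\<exists>L. \<forall>x\<in>Dsp. \<forall>y\<in>Dsp.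
      supn (\<lambda>t. \<Psi> x t - \<Psi> y t) \<le> L * supn (\<lambda>t. x t - y t))"

definition jointly_J1_continuous_at ::
    "((real \<Rightarrow> real) \<Rightarrow> (real \<Rightarrow> real)) \<Rightarrow> (real \<Rightarrow> real) \<Rightarrow> bool" where
  "jointly_J1_continuous_at \<Psi> x \<longleftrightarrow>
     (\<forall>xn. (\<forall>n. xn n \<in> Dsp) \<and> J1_conv xn x \<longrightarrow>
        (\<exists>ln. (\<forall>n. ln n \<in> Lambda_set) \<and>
           (\<lambda>n. supn (\<lambda>t. ln n t - t)) \<longlonglongrightarrow> 0 \<and>
           (\<lambda>n. supn (\<lambda>t. xn n (ln n t) - x t)) \<longlonglongrightarrow> 0 \<and>
           (\<lambda>n. supn (\<lambda>t. \<Psi> (xn n) (ln n t) - \<Psi> x t)) \<longlonglongrightarrow> 0))"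

definition jump :: "(real \<Rightarrow> real) \<Rightarrow> real \<Rightarrow> real" where
  "jump x t = (if t \<le> 0 then 0 else x t - Lim (at_left t) x)"

definition Ssup :: "(real \<Rightarrow> real) \<Rightarrow> real \<Rightarrow> real" where
  "Ssup x t = (SUP s\<in>{0..t}. x s)"

definition Sabs :: "(real \<Rightarrow> real) \<Rightarrow> real \<Rightarrow> real" where
  "Sabs x t = (SUP s\<in>{0..t}. \<bar>x s\<bar>)"

text \<open>S_Delta(x)(t) = sup of jumps; S_{+Delta} = S_Delta, S_{-Delta}(x) = S_Delta(-x).\<close>
definition Sdelta :: "(real \<Rightarrow> real) \<Rightarrow> real \<Rightarrow> real" where
  "Sdelta x t = (SUP s\<in>{0..t}. jump x s)"

definition Sdelta_pm :: "bool \<Rightarrow> (real \<Rightarrow> real) \<Rightarrow> real \<Rightarrow> real" where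
  "Sdelta_pm pos x = (if pos then Sdelta x else Sdelta (\<lambda>t. - x t))"

definition Sdelta_abs :: "(real \<Rightarrow> real) \<Rightarrow> real \<Rightarrow> real" where
  "Sdelta_abs x t = (SUP s\<in>{0..t}. \<bar>jump x s\<bar>)"

text \<open>T^{(1,+-)}_rim(x) = x -+ S_{+-Delta}(x); pos = True is '+', False is '-'.\<close>
definition Trim1 :: "bool \<Rightarrow> (real \<Rightarrow> real) \<Rightarrow> real \<Rightarrow> real" where
  "Trim1 pos x t = (if pos then x t - Sdelta_pm True x t else x t + Sdelta_pm False x t)"

definition Trim :: "nat \<Rightarrow> bool \<Rightarrow> (real \<Rightarrow> real) \<Rightarrow> real \<Rightarrow> real" where
  "Trim r pos = (Trim1 pos ^^ r)"

definition Sdelta_r :: "nat \<Rightarrow> bool \<Rightarrow> (real \<Rightarrow> real) \<Rightarrow> real \<Rightarrow> real" where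
  "Sdelta_r r pos x = Sdelta_pm pos (Trim (r - 1) pos x)"

definition Trim_rs :: "nat \<Rightarrow> nat \<Rightarrow> (real \<Rightarrow> real) \<Rightarrow> real \<Rightarrow> real" where
  "Trim_rs r s x = Trim r True (Trim s False x)"

definition Trim_tilde1 :: "(real \<Rightarrow> real) \<Rightarrow> real \<Rightarrow> real" where
  "Trim_tilde1 x t = x t - Sdelta_abs x t"

definition Trim_tilde :: "nat \<Rightarrow> (real \<Rightarrow> real) \<Rightarrow> real \<Rightarrow> real" where
  "Trim_tilde r = (Trim_tilde1 ^^ r)"

definition Sdelta_tilde_r :: "nat \<Rightarrow> (real \<Rightarrow> real) \<Rightarrow> real \<Rightarrow> real" where
  "Sdelta_tilde_r r x = Sdelta_abs (Trim_tilde (r - 1) x)"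

definition operators :: "nat \<Rightarrow> nat \<Rightarrow> ((real \<Rightarrow> real) \<Rightarrow> (real \<Rightarrow> real)) set" where
  "operators r s = {Ssup, Sabs, Sdelta_pm True, Sdelta_pm False, Sdelta_abs,
     Trim r True, Trim r False, Sdelta_r r True, Sdelta_r r False,
     Trim_rs r s, Trim_tilde r, Sdelta_tilde_r r}"

end

theory Submission
  imports Defs
begin

text \<open>Each operator of the family is built from running suprema \<open>t \<mapsto> sup {g s | s \<in> [0,t]}\<close> of
  one of the pointwise functionals \<open>x\<close>, \<open>\<bar>x\<bar>\<close>, \<open>\<Delta>x\<close>, \<open>\<bar>\<Delta>x\<bar>\<close> by composition, iteration,
  negation and adding or subtracting the identity. All of these are Lipschitz for the uniform
  norm (a jump is at most twice the norm), commute with time changes \<open>\<lambda> \<in> \<Lambda>\<close> (\<open>\<lambda>\<close> maps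
  \<open>[0,t]\<close> onto \<open>[0,\<lambda> t]\<close> and, being a homeomorphism, transports left limits and hence jumps),
  and preserve cadlag paths (a running supremum is monotone, and it is right-continuous
  because \<open>x\<close> and \<open>\<bar>x\<bar>\<close> are, while jumps just to the right of a point are small).

  Joint \<open>J\<^sub>1\<close>-continuity then needs no new time changes: if \<open>\<lambda>\<^sub>n\<close> witness \<open>x\<^sub>n \<rightarrow> x\<close>, then
  \<open>\<Psi> x\<^sub>n \<circ> \<lambda>\<^sub>n = \<Psi> (x\<^sub>n \<circ> \<lambda>\<^sub>n)\<close>, which is within \<open>L \<parallel>x\<^sub>n \<circ> \<lambda>\<^sub>n - x\<parallel>\<close> of \<open>\<Psi> x\<close>.\<close>

section \<open>The Skorokhod space\<close>

lemma DspI: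
  assumes "\<And>t. 0 \<le> t \<Longrightarrow> t < 1 \<Longrightarrow> (x \<longlongrightarrow> x t) (at_right t)"
    and "\<And>t. 0 < t \<Longrightarrow> t \<le> 1 \<Longrightarrow> \<exists>l. (x \<longlongrightarrow> l) (at_left t)"
  shows "x \<in> Dsp"
  using assms by (auto simp: Dsp_def cadlag_def)

lemma Dsp_tendsto_at_right:
  "x \<in> Dsp \<Longrightarrow> 0 \<le> t \<Longrightarrow> t < 1 \<Longrightarrow> (x \<longlongrightarrow> x t) (at_right t)"
  by (auto simp: Dsp_def cadlag_def)

lemma Dsp_left_limit:
  "x \<in> Dsp \<Longrightarrow> 0 < t \<Longrightarrow> t \<le> 1 \<Longrightarrow> \<exists>l. (x \<longlongrightarrow> l) (at_left t)"
  by (auto simp: Dsp_def cadlag_def)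

lemma Dsp_tendsto_Lim_at_left:
  "x \<in> Dsp \<Longrightarrow> 0 < t \<Longrightarrow> t \<le> 1 \<Longrightarrow> (x \<longlongrightarrow> Lim (at_left t) x) (at_left t)"
  using Dsp_left_limit tendsto_Lim trivial_limit_at_left_real by blast

lemma Dsp_diff: "x \<in> Dsp \<Longrightarrow> y \<in> Dsp \<Longrightarrow> (\<lambda>t. x t - y t) \<in> Dsp"
  by (rule DspI) (blast intro: tendsto_diff Dsp_tendsto_at_right, metis Dsp_left_limit tendsto_diff)

lemma Dsp_add: "x \<in> Dsp \<Longrightarrow> y \<in> Dsp \<Longrightarrow> (\<lambda>t. x t + y t) \<in> Dsp"
  by (rule DspI) (blast intro: tendsto_add Dsp_tendsto_at_right, metis Dsp_left_limit tendsto_add)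

lemma Dsp_uminus: "x \<in> Dsp \<Longrightarrow> (\<lambda>t. - x t) \<in> Dsp"
  by (rule DspI) (blast intro: tendsto_minus Dsp_tendsto_at_right, metis Dsp_left_limit tendsto_minus)

lemma Dsp_abs: "x \<in> Dsp \<Longrightarrow> (\<lambda>t. \<bar>x t\<bar>) \<in> Dsp"
  by (rule DspI) (blast intro: tendsto_rabs Dsp_tendsto_at_right, metis Dsp_left_limit tendsto_rabs)

lemma Dsp_eventually_bounded_at:
  assumes x: "x \<in> Dsp" and t: "t \<in> {0..1}"
  shows "\<exists>B. eventually (\<lambda>u. u \<in> {0..1} \<longrightarrow> \<bar>x u\<bar> \<le> B) (at t)"
proof -
  have near_limit: "eventually (\<lambda>u. \<bar>x u\<bar> \<le> \<bar>l\<bar> + 1) F" if "(x \<longlongrightarrow> l) F" for l F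
    using eventually_mono[OF tendstoD[OF that zero_less_one]] by (auto simp: dist_real_def)
  obtain B1 where B1: "eventually (\<lambda>u. u \<in> {0..1} \<longrightarrow> \<bar>x u\<bar> \<le> B1) (at_right t)"
  proof (cases "t < 1")
    case True
    show ?thesis
      by (rule that[OF eventually_mono[OF near_limit[OF Dsp_tendsto_at_right[OF x _ True]]]])
        (use t in auto)
  next
    case False
    then have "eventually (\<lambda>u. u \<notin> {0..1}) (at_right t)"
      using t by (auto simp: eventually_at_filter)
    then show ?thesis by (rule that[of 0, OF eventually_mono]) blast
  qed
  obtain B2 where B2: "eventually (\<lambda>u. u \<in> {0..1} \<longrightarrow> \<bar>x u\<bar> \<le> B2) (at_left t)"
  proof (cases "0 < t")
    case True
    then obtain l where l: "(x \<longlongrightarrow> l) (at_left t)" using Dsp_left_limit[OF x] t by auto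
    show ?thesis by (rule that[of "\<bar>l\<bar> + 1", OF eventually_mono[OF near_limit[OF l]]]) simp
  next
    case False
    then have "eventually (\<lambda>u. u \<notin> {0..1}) (at_left t)"
      using t by (auto simp: eventually_at_filter)
    then show ?thesis by (rule that[of 0, OF eventually_mono]) blast
  qed
  have "eventually (\<lambda>u. u \<in> {0..1} \<longrightarrow> \<bar>x u\<bar> \<le> max B1 B2) (at t)"
    unfolding eventually_at_split using B1 B2 by (auto elim: eventually_mono)
  then show ?thesis ..
qed

lemma Dsp_bounded:
  assumes x: "x \<in> Dsp"
  shows "\<exists>B. \<forall>t\<in>{0..1}. \<bar>x t\<bar> \<le> B"
proof -
  have "\<exists>d B. 0 < d \<and> (\<forall>u\<in>{0..1}. dist u t < d \<longrightarrow> \<bar>x u\<bar> \<le> B)" if t: "t \<in> {0..1}" for t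
  proof -
    obtain B where "eventually (\<lambda>u. u \<in> {0..1} \<longrightarrow> \<bar>x u\<bar> \<le> B) (at t)"
      using Dsp_eventually_bounded_at[OF x t] ..
    then obtain d where "0 < d" "\<forall>u\<in>{0..1}. 0 < dist u t \<and> dist u t < d \<longrightarrow> \<bar>x u\<bar> \<le> B"
      by (auto simp: eventually_at)
    then show ?thesis by (intro exI[of _ d] exI[of _ "max B \<bar>x t\<bar>"]) force
  qed
  then obtain d B where dB: "\<And>t. t \<in> {0..1} \<Longrightarrow> 0 < d t \<and> (\<forall>u\<in>{0..1}. dist u t < d t \<longrightarrow> \<bar>x u\<bar> \<le> B t)"
    by metis
  obtain K where K: "K \<subseteq> {0..1}" "finite K" "{0..1} \<subseteq> (\<Union>t\<in>K. ball t (d t))"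
    by (rule compactE_image[where S = "{0..1::real}" and C = "{0..1}" and f = "\<lambda>t. ball t (d t)"]) (use dB in auto)
  have "\<bar>x u\<bar> \<le> (\<Sum>t\<in>K. \<bar>B t\<bar>)" if u: "u \<in> {0..1}" for u
  proof -
    obtain t where t: "t \<in> K" "dist t u < d t" using K u by auto
    then have "\<bar>x u\<bar> \<le> B t" using dB[of t] K u by (auto simp: dist_commute)
    also have "\<dots> \<le> \<bar>B t\<bar>" by simp
    also have "\<dots> \<le> (\<Sum>t\<in>K. \<bar>B t\<bar>)" by (rule member_le_sum) (use t K in auto)
    finally show ?thesis .
  qed
  then show ?thesis by blast
qed

lemma abs_le_supn:
  assumes "x \<in> Dsp" "t \<in> {0..1}"
  shows "\<bar>x t\<bar> \<le> supn x"
proof -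
  obtain B where "\<forall>t\<in>{0..1}. \<bar>x t\<bar> \<le> B" using Dsp_bounded[OF assms(1)] ..
  then show ?thesis unfolding supn_def by (intro cSUP_upper bdd_aboveI2) (use assms(2) in auto)
qed

lemma supn_nonneg: "x \<in> Dsp \<Longrightarrow> 0 \<le> supn x"
  using abs_le_supn[of x 0] by force

lemma supn_least: "(\<And>t. t \<in> {0..1} \<Longrightarrow> \<bar>x t\<bar> \<le> M) \<Longrightarrow> supn x \<le> M"
  unfolding supn_def by (rule cSUP_least) auto

lemma abs_diff_le_supn:
  "x \<in> Dsp \<Longrightarrow> y \<in> Dsp \<Longrightarrow> t \<in> {0..1} \<Longrightarrow> \<bar>x t - y t\<bar> \<le> supn (\<lambda>t. x t - y t)"
  using abs_le_supn[OF Dsp_diff] by blast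

lemma Dsp_bdd_above: "x \<in> Dsp \<Longrightarrow> bdd_above (x ` {0..1})"
  using abs_le_supn by (intro bdd_aboveI2[of _ _ "supn x"]) (meson abs_ge_self order_trans)

lemma supn_cong: "(\<And>t. t \<in> {0..1} \<Longrightarrow> x t = y t) \<Longrightarrow> supn x = supn y"
  unfolding supn_def by (rule SUP_cong) auto

section \<open>Time changes\<close>

lemma Lambda_setD:
  assumes "l \<in> Lambda_set"
  shows "continuous_on {0..1} l" "strict_mono_on {0..1} l" "l 0 = 0" "l 1 = 1"
  using assms by (auto simp: Lambda_set_def)

lemma Lambda_less: "l \<in> Lambda_set \<Longrightarrow> a \<in> {0..1} \<Longrightarrow> b \<in> {0..1} \<Longrightarrow> a < b \<Longrightarrow> l a < l b"
  using Lambda_setD(2) strict_mono_onD by blast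

lemma Lambda_le: "l \<in> Lambda_set \<Longrightarrow> a \<in> {0..1} \<Longrightarrow> b \<in> {0..1} \<Longrightarrow> a \<le> b \<Longrightarrow> l a \<le> l b"
  using Lambda_less[of l a b] by (cases "a = b") auto

lemma Lambda_image_Icc:
  assumes l: "l \<in> Lambda_set" and t: "t \<in> {0..1}"
  shows "l ` {0..t} = {0..l t}"
proof
  show "l ` {0..t} \<subseteq> {0..l t}"
    using Lambda_le[OF l] Lambda_setD(3)[OF l] t by fastforce
  have "continuous_on {0..t} l"
    using Lambda_setD(1)[OF l] by (rule continuous_on_subset) (use t in auto)
  then show "{0..l t} \<subseteq> l ` {0..t}"
    using IVT'[of l 0 _ t] Lambda_setD(3)[OF l] t by fastforce
qed

lemma Lambda_mem: "l \<in> Lambda_set \<Longrightarrow> t \<in> {0..1} \<Longrightarrow> l t \<in> {0..1}"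
  using Lambda_image_Icc[of l 1] Lambda_setD(4)[of l] by auto

lemma Lambda_filterlim_at_right:
  assumes l: "l \<in> Lambda_set" and t: "0 \<le> t" "t < 1"
  shows "filterlim l (at_right (l t)) (at_right t)"
proof (rule tendsto_imp_filterlim_at_right)
  have "continuous_on {t..1} l"
    using Lambda_setD(1)[OF l] by (rule continuous_on_subset) (use t in auto)
  then show "(l \<longlongrightarrow> l t) (at_right t)"
    using t(2) by (rule continuous_on_Icc_at_rightD)
  show "eventually (\<lambda>s. l t < l s) (at_right t)"
    unfolding eventually_at_right_field
    by (rule exI[of _ 1]) (use t Lambda_less[OF l] in auto)
qed

lemma Lambda_filterlim_at_left:
  assumes l: "l \<in> Lambda_set" and t: "0 < t" "t \<le> 1"
  shows "filterlim l (at_left (l t)) (at_left t)"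
proof (rule tendsto_imp_filterlim_at_left)
  have "continuous_on {0..t} l"
    using Lambda_setD(1)[OF l] by (rule continuous_on_subset) (use t in auto)
  then show "(l \<longlongrightarrow> l t) (at_left t)"
    using t(1) by (rule continuous_on_Icc_at_leftD)
  show "eventually (\<lambda>s. l s < l t) (at_left t)"
    unfolding eventually_at_left_field
    by (rule exI[of _ 0]) (use t Lambda_less[OF l] in auto)
qed

lemma Dsp_comp_Lambda:
  assumes x: "x \<in> Dsp" and l: "l \<in> Lambda_set"
  shows "x \<circ> l \<in> Dsp"
proof (rule DspI)
  fix t :: real assume t: "0 \<le> t" "t < 1"
  have "l t < 1" using Lambda_less[OF l, of t 1] Lambda_setD(4)[OF l] t by simp
  then have "(x \<longlongrightarrow> x (l t)) (at_right (l t))"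
    using Dsp_tendsto_at_right[OF x] Lambda_mem[OF l, of t] t by simp
  then show "((x \<circ> l) \<longlongrightarrow> (x \<circ> l) t) (at_right t)"
    unfolding o_def by (rule filterlim_compose[OF _ Lambda_filterlim_at_right[OF l t]])
next
  fix t :: real assume t: "0 < t" "t \<le> 1"
  have "0 < l t" using Lambda_less[OF l, of 0 t] Lambda_setD(3)[OF l] t by simp
  then have "(x \<longlongrightarrow> Lim (at_left (l t)) x) (at_left (l t))"
    using Dsp_tendsto_Lim_at_left[OF x] Lambda_mem[OF l, of t] t by simp
  then show "\<exists>L. ((x \<circ> l) \<longlongrightarrow> L) (at_left t)"
    unfolding o_def using filterlim_compose[OF _ Lambda_filterlim_at_left[OF l t]] by blast
qed

section \<open>Jumps\<close>

lemma jump_nonpos [simp]: "t \<le> 0 \<Longrightarrow> jump x t = 0"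
  by (simp add: jump_def)

lemma jump_eq:
  assumes "(x \<longlongrightarrow> L) (at_left t)" "0 < t"
  shows "jump x t = x t - L"
  using tendsto_Lim[OF trivial_limit_at_left_real assms(1)] assms(2) by (simp add: jump_def)

lemma Dsp_Lim_at_left_bound:
  assumes x: "x \<in> Dsp" and s: "0 < s" "s \<le> 1" and "a < s"
    and bound: "\<And>u. a < u \<Longrightarrow> u < s \<Longrightarrow> \<bar>x u - c\<bar> \<le> M"
  shows "\<bar>Lim (at_left s) x - c\<bar> \<le> M"
proof -
  have "((\<lambda>u. x u - c) \<longlongrightarrow> Lim (at_left s) x - c) (at_left s)"
    by (intro tendsto_diff Dsp_tendsto_Lim_at_left[OF x s] tendsto_const)
  moreover have "eventually (\<lambda>u. norm (x u - c) \<le> M) (at_left s)"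
    unfolding eventually_at_left_field using \<open>a < s\<close> bound by auto
  ultimately show ?thesis
    using Lim_norm_ubound[OF trivial_limit_at_left_real] by fastforce
qed

lemma abs_jump_le_supn:
  assumes x: "x \<in> Dsp" and s: "s \<in> {0..1}"
  shows "\<bar>jump x s\<bar> \<le> 2 * supn x"
proof (cases "s \<le> 0")
  case True
  then show ?thesis using supn_nonneg[OF x] by simp
next
  case False
  have "\<bar>Lim (at_left s) x - 0\<bar> \<le> supn x"
    by (rule Dsp_Lim_at_left_bound[OF x, of s 0]) (use False s abs_le_supn[OF x] in auto)
  moreover have "\<bar>x s\<bar> \<le> supn x" using abs_le_supn[OF x s] .
  ultimately show ?thesis using False by (simp add: jump_def)
qed

lemma bdd_above_jump: "x \<in> Dsp \<Longrightarrow> bdd_above (jump x ` {0..1})"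
  using abs_jump_le_supn by (intro bdd_aboveI2[of _ _ "2 * supn x"]) (meson abs_ge_self order_trans)

lemma bdd_above_abs_jump: "x \<in> Dsp \<Longrightarrow> bdd_above ((\<lambda>s. \<bar>jump x s\<bar>) ` {0..1})"
  using abs_jump_le_supn by (intro bdd_aboveI2[of _ _ "2 * supn x"]) auto

lemma jump_diff:
  assumes x: "x \<in> Dsp" and y: "y \<in> Dsp" and s: "s \<in> {0..1}"
  shows "jump (\<lambda>t. x t - y t) s = jump x s - jump y s"
proof (cases "s \<le> 0")
  case False
  have "(x \<longlongrightarrow> Lim (at_left s) x) (at_left s)" "(y \<longlongrightarrow> Lim (at_left s) y) (at_left s)"
    using Dsp_tendsto_Lim_at_left x y s False by auto
  then have "jump (\<lambda>t. x t - y t) s = (x s - y s) - (Lim (at_left s) x - Lim (at_left s) y)"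
    using False by (intro jump_eq tendsto_diff) auto
  then show ?thesis using False by (simp add: jump_def)
qed simp

lemma jump_lipschitz:
  assumes x: "x \<in> Dsp" and y: "y \<in> Dsp" and s: "s \<in> {0..1}"
  shows "\<bar>jump x s - jump y s\<bar> \<le> 2 * supn (\<lambda>t. x t - y t)"
  using abs_jump_le_supn[OF Dsp_diff[OF x y] s] by (simp add: jump_diff[OF x y s])

lemma jump_eventually_small_at_right:
  assumes x: "x \<in> Dsp" and t: "0 \<le> t" "t < 1" and e: "0 < e"
  shows "eventually (\<lambda>s. \<bar>jump x s\<bar> \<le> e) (at_right t)"
proof -
  have "eventually (\<lambda>u. dist (x u) (x t) < e / 2) (at_right t)"
    using tendstoD[OF Dsp_tendsto_at_right[OF x t], of "e / 2"] e by simp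
  then obtain b where b: "t < b" "\<And>u. t < u \<Longrightarrow> u < b \<Longrightarrow> \<bar>x u - x t\<bar> < e / 2"
    by (auto simp: eventually_at_right_field dist_real_def)
  have "\<bar>jump x s\<bar> \<le> e" if s: "t < s" "s < min b 1" for s
  proof -
    have "\<bar>Lim (at_left s) x - x t\<bar> \<le> e / 2"
      by (rule Dsp_Lim_at_left_bound[OF x, of s t]) (use s t b in \<open>auto intro: less_imp_le\<close>)
    moreover have "\<bar>x s - x t\<bar> < e / 2" using b s by simp
    ultimately have "\<bar>(x s - x t) - (Lim (at_left s) x - x t)\<bar> \<le> e"
      using abs_triangle_ineq4[of "x s - x t" "Lim (at_left s) x - x t"] by linarith
    then show ?thesis using s t by (simp add: jump_def)
  qed
  then show ?thesis
    unfolding eventually_at_right_field using b t by (intro exI[of _ "min b 1"]) auto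
qed

lemma jump_comp_Lambda:
  assumes x: "x \<in> Dsp" and l: "l \<in> Lambda_set" and s: "s \<in> {0..1}"
  shows "jump (x \<circ> l) s = jump x (l s)"
proof (cases "s \<le> 0")
  case True
  then show ?thesis using s Lambda_setD(3)[OF l] by simp
next
  case False
  have "0 < l s" using Lambda_less[OF l, of 0 s] Lambda_setD(3)[OF l] False s by simp
  then have L: "(x \<longlongrightarrow> Lim (at_left (l s)) x) (at_left (l s))"
    using Dsp_tendsto_Lim_at_left[OF x] Lambda_mem[OF l s] by simp
  have "((x \<circ> l) \<longlongrightarrow> Lim (at_left (l s)) x) (at_left s)"
    unfolding o_def using filterlim_compose[OF L Lambda_filterlim_at_left[OF l]] False s by simp
  then show ?thesis
    using jump_eq[OF L \<open>0 < l s\<close>] jump_eq False by simp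
qed

lemma jump_cong:
  assumes eq: "\<And>t. t \<in> {0..1} \<Longrightarrow> f t = g t" and s: "s \<in> {0..1}"
  shows "jump f s = jump g s"
proof (cases "s \<le> 0")
  case False
  have "eventually (\<lambda>u. f u = g u) (at_left s)"
    unfolding eventually_at_left_field using False s eq by (intro exI[of _ 0]) auto
  then have "Lim (at_left s) f = Lim (at_left s) g" by (rule Lim_cong) simp
  then show ?thesis using eq s by (simp add: jump_def)
qed simp

section \<open>Running suprema\<close>

lemma Ssup_upper:
  assumes "bdd_above (g ` {0..1})" "0 \<le> s" "s \<le> t" "t \<le> 1"
  shows "g s \<le> Ssup g t"
proof -
  have "bdd_above (g ` {0..t})"
    using assms(1) by (rule bdd_above_mono) (use assms(4) in auto)
  then show ?thesis unfolding Ssup_def by (rule cSUP_upper[rotated]) (use assms in auto)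
qed

lemma Ssup_least:
  assumes "0 \<le> t" "\<And>s. s \<in> {0..t} \<Longrightarrow> g s \<le> M"
  shows "Ssup g t \<le> M"
  unfolding Ssup_def by (rule cSUP_least) (use assms in auto)

lemma Ssup_mono:
  assumes "bdd_above (g ` {0..1})" "0 \<le> t" "t \<le> t'" "t' \<le> 1"
  shows "Ssup g t \<le> Ssup g t'"
  using assms Ssup_upper[OF assms(1)] by (intro Ssup_least) auto

lemma Ssup_le_Ssup_add:
  assumes "bdd_above (h ` {0..1})" "t \<in> {0..1}" "\<And>s. s \<in> {0..t} \<Longrightarrow> g s \<le> h s + M"
  shows "Ssup g t \<le> Ssup h t + M"
proof (rule Ssup_least)
  show "g s \<le> Ssup h t + M" if "s \<in> {0..t}" for s
    using assms(3)[OF that] Ssup_upper[OF assms(1), of s t] that assms(2) by force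
qed (use assms(2) in auto)

lemma Ssup_dist_le:
  assumes "bdd_above (g ` {0..1})" "bdd_above (h ` {0..1})"
    and t: "t \<in> {0..1}" and close: "\<And>s. s \<in> {0..t} \<Longrightarrow> \<bar>g s - h s\<bar> \<le> M"
  shows "\<bar>Ssup g t - Ssup h t\<bar> \<le> M"
proof -
  have "g s \<le> h s + M" "h s \<le> g s + M" if "s \<in> {0..t}" for s
    using close[OF that] by (auto simp: abs_le_iff)
  then have "Ssup g t \<le> Ssup h t + M" "Ssup h t \<le> Ssup g t + M"
    using Ssup_le_Ssup_add[OF assms(2) t] Ssup_le_Ssup_add[OF assms(1) t] by blast+
  then show ?thesis by linarith
qed

lemma Ssup_comp_Lambda:
  assumes "l \<in> Lambda_set" "t \<in> {0..1}"
  shows "Ssup g (l t) = Ssup (g \<circ> l) t"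
  unfolding Ssup_def using Lambda_image_Icc[OF assms] by (metis image_comp)

lemma Ssup_cong:
  assumes "\<And>s. s \<in> {0..1} \<Longrightarrow> g s = h s" "t \<in> {0..1}"
  shows "Ssup g t = Ssup h t"
  unfolding Ssup_def by (rule SUP_cong) (use assms in auto)

lemma Ssup_tendsto_at_right:
  assumes bdd: "bdd_above (g ` {0..1})" and t: "0 \<le> t" "t < 1"
    and right: "\<And>e. 0 < e \<Longrightarrow> eventually (\<lambda>s. g s \<le> Ssup g t + e) (at_right t)"
  shows "(Ssup g \<longlongrightarrow> Ssup g t) (at_right t)"
proof (rule tendstoI)
  fix e :: real assume e: "0 < e"
  obtain b where b: "t < b" "\<And>s. t < s \<Longrightarrow> s < b \<Longrightarrow> g s \<le> Ssup g t + e / 2"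
    using right[of "e / 2"] e by (auto simp: eventually_at_right_field)
  have "dist (Ssup g s) (Ssup g t) < e" if s: "t < s" "s < min b 1" for s
  proof -
    have "Ssup g t \<le> Ssup g s" by (rule Ssup_mono[OF bdd]) (use s t in auto)
    moreover have "Ssup g s \<le> Ssup g t + e / 2"
    proof (rule Ssup_least)
      show "g u \<le> Ssup g t + e / 2" if u: "u \<in> {0..s}" for u
      proof (cases "u \<le> t")
        case True
        then show ?thesis using Ssup_upper[OF bdd, of u t] u t e by auto
      qed (use b s u in auto)
    qed (use s t in auto)
    ultimately show ?thesis using e by (simp add: dist_real_def)
  qed
  then show "eventually (\<lambda>s. dist (Ssup g s) (Ssup g t) < e) (at_right t)"
    unfolding eventually_at_right_field using b t by (intro exI[of _ "min b 1"]) auto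
qed

lemma Ssup_left_limit:
  assumes bdd: "bdd_above (g ` {0..1})" and t: "0 < t" "t \<le> 1"
  shows "\<exists>L. (Ssup g \<longlongrightarrow> L) (at_left t)"
proof -
  obtain B where B: "\<forall>s\<in>{0..1}. g s \<le> B" using bdd by (auto simp: bdd_above_def)
  have "(Ssup g \<longlongrightarrow> Sup (Ssup g ` ({..<t} \<inter> {0..<t}))) (at t within ({..<t} \<inter> {0..<t}))"
  proof (rule Lim_left_bound)
    show "Ssup g a \<le> Ssup g b" if "a \<in> {0..<t}" "b \<in> {0..<t}" "a \<le> b" for a b
      by (rule Ssup_mono[OF bdd]) (use that t in auto)
    show "Ssup g b \<le> B" if "b \<in> {0..<t}" for b
      by (rule Ssup_least) (use that t B in auto)
  qed
  moreover have "at t within ({..<t} \<inter> {0..<t}) = at_left t"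
    using at_within_Icc_at_left[OF t(1)]
    by (simp add: at_within_def atLeastLessThan_eq_atLeastAtMost_diff Int_absorb1 subset_eq)
  ultimately show ?thesis by auto
qed

lemma Ssup_in_Dsp:
  assumes "bdd_above (g ` {0..1})"
    and "\<And>t e. 0 \<le> t \<Longrightarrow> t < 1 \<Longrightarrow> 0 < e \<Longrightarrow> eventually (\<lambda>s. g s \<le> Ssup g t + e) (at_right t)"
  shows "Ssup g \<in> Dsp"
  using assms by (intro DspI Ssup_tendsto_at_right Ssup_left_limit)

lemma Dsp_eventually_le_Ssup_at_right:
  assumes x: "x \<in> Dsp" and t: "0 \<le> t" "t < 1" and e: "0 < e"
  shows "eventually (\<lambda>s. x s \<le> Ssup x t + e) (at_right t)"
proof -
  have "x t \<le> Ssup x t" using Ssup_upper[OF Dsp_bdd_above[OF x], of t t] t by simp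
  then show ?thesis
    using tendstoD[OF Dsp_tendsto_at_right[OF x t] e] by (auto simp: dist_real_def elim: eventually_mono)
qed

section \<open>Lipschitz operators compatible with time changes\<close>

text \<open>The locality clause makes \<open>Lambda_compatible\<close> stable under composition, since
  \<open>\<Phi> x \<circ> l\<close> and \<open>\<Phi> (x \<circ> l)\<close> are only known to agree on \<open>[0,1]\<close>.\<close>
definition admissible_op :: "((real \<Rightarrow> real) \<Rightarrow> (real \<Rightarrow> real)) \<Rightarrow> real \<Rightarrow> bool" where
  "admissible_op \<Psi> L \<longleftrightarrow> 0 \<le> L \<and> (\<forall>x\<in>Dsp. \<Psi> x \<in> Dsp) \<and>
     (\<forall>x\<in>Dsp. \<forall>y\<in>Dsp. \<forall>t\<in>{0..1}. \<bar>\<Psi> x t - \<Psi> y t\<bar> \<le> L * supn (\<lambda>t. x t - y t)) \<and>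
     (\<forall>f g. (\<forall>t\<in>{0..1}. f t = g t) \<longrightarrow> (\<forall>t\<in>{0..1}. \<Psi> f t = \<Psi> g t)) \<and>
     Lambda_compatible \<Psi>"

lemma admissible_opI:
  assumes "0 \<le> L" "\<And>x. x \<in> Dsp \<Longrightarrow> \<Psi> x \<in> Dsp"
    "\<And>x y t. x \<in> Dsp \<Longrightarrow> y \<in> Dsp \<Longrightarrow> t \<in> {0..1} \<Longrightarrow> \<bar>\<Psi> x t - \<Psi> y t\<bar> \<le> L * supn (\<lambda>t. x t - y t)"
    "\<And>f g t. (\<And>s. s \<in> {0..1} \<Longrightarrow> f s = g s) \<Longrightarrow> t \<in> {0..1} \<Longrightarrow> \<Psi> f t = \<Psi> g t"
    "\<And>x l t. x \<in> Dsp \<Longrightarrow> l \<in> Lambda_set \<Longrightarrow> t \<in> {0..1} \<Longrightarrow> \<Psi> x (l t) = \<Psi> (x \<circ> l) t"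
  shows "admissible_op \<Psi> L"
  using assms unfolding admissible_op_def Lambda_compatible_def by blast

context
  fixes \<Psi> L assumes \<Psi>: "admissible_op \<Psi> L"
begin

lemma admissible_op_nonneg: "0 \<le> L"
  using \<Psi> by (simp add: admissible_op_def)

lemma admissible_op_Dsp: "x \<in> Dsp \<Longrightarrow> \<Psi> x \<in> Dsp"
  using \<Psi> by (simp add: admissible_op_def)

lemma admissible_op_lipschitz:
  "x \<in> Dsp \<Longrightarrow> y \<in> Dsp \<Longrightarrow> t \<in> {0..1} \<Longrightarrow> \<bar>\<Psi> x t - \<Psi> y t\<bar> \<le> L * supn (\<lambda>t. x t - y t)"
  using \<Psi> by (simp add: admissible_op_def)

lemma admissible_op_cong:
  "(\<And>s. s \<in> {0..1} \<Longrightarrow> f s = g s) \<Longrightarrow> t \<in> {0..1} \<Longrightarrow> \<Psi> f t = \<Psi> g t"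
  using \<Psi> by (simp add: admissible_op_def)

lemma admissible_op_comp_Lambda:
  "x \<in> Dsp \<Longrightarrow> l \<in> Lambda_set \<Longrightarrow> t \<in> {0..1} \<Longrightarrow> \<Psi> x (l t) = \<Psi> (x \<circ> l) t"
  using \<Psi> by (simp add: admissible_op_def Lambda_compatible_def)

lemma admissible_op_supn_le:
  "x \<in> Dsp \<Longrightarrow> y \<in> Dsp \<Longrightarrow> supn (\<lambda>t. \<Psi> x t - \<Psi> y t) \<le> L * supn (\<lambda>t. x t - y t)"
  by (rule supn_least) (rule admissible_op_lipschitz)

end

lemma admissible_op_norm_Lipschitz: "admissible_op \<Psi> L \<Longrightarrow> norm_Lipschitz \<Psi>"
  unfolding norm_Lipschitz_def using admissible_op_supn_le by blast

lemma admissible_op_Lambda_compatible: "admissible_op \<Psi> L \<Longrightarrow> Lambda_compatible \<Psi>"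
  by (simp add: admissible_op_def)

lemma admissible_op_jointly_J1_continuous_at:
  assumes \<Psi>: "admissible_op \<Psi> L" and x: "x \<in> Dsp"
  shows "jointly_J1_continuous_at \<Psi> x"
  unfolding jointly_J1_continuous_at_def
proof (intro allI impI)
  fix xn assume "(\<forall>n. xn n \<in> Dsp) \<and> J1_conv xn x"
  then obtain ln where xn: "\<And>n. xn n \<in> Dsp" and ln: "\<And>n. ln n \<in> Lambda_set"
    and ln_I: "(\<lambda>n. supn (\<lambda>t. ln n t - t)) \<longlonglongrightarrow> 0"
    and xn_ln: "(\<lambda>n. supn (\<lambda>t. xn n (ln n t) - x t)) \<longlonglongrightarrow> 0"
    unfolding J1_conv_def by blast
  have xn_ln_Dsp: "xn n \<circ> ln n \<in> Dsp" for n using Dsp_comp_Lambda[OF xn ln] .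
  have eq: "supn (\<lambda>t. \<Psi> (xn n) (ln n t) - \<Psi> x t) = supn (\<lambda>t. \<Psi> (xn n \<circ> ln n) t - \<Psi> x t)" for n
    by (rule supn_cong) (simp add: admissible_op_comp_Lambda[OF \<Psi> xn ln])
  have "(\<lambda>n. supn (\<lambda>t. \<Psi> (xn n) (ln n t) - \<Psi> x t)) \<longlonglongrightarrow> 0"
  proof (rule real_tendsto_sandwich)
    show "eventually (\<lambda>n. 0 \<le> supn (\<lambda>t. \<Psi> (xn n) (ln n t) - \<Psi> x t)) sequentially"
      unfolding eq by (intro always_eventually allI supn_nonneg Dsp_diff admissible_op_Dsp[OF \<Psi>] xn_ln_Dsp x)
    show "eventually (\<lambda>n. supn (\<lambda>t. \<Psi> (xn n) (ln n t) - \<Psi> x t) \<le> L * supn (\<lambda>t. xn n (ln n t) - x t)) sequentially"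
      unfolding eq using admissible_op_supn_le[OF \<Psi> xn_ln_Dsp x] by simp
    show "(\<lambda>n. L * supn (\<lambda>t. xn n (ln n t) - x t)) \<longlonglongrightarrow> 0"
      using tendsto_mult_right_zero[OF xn_ln] .
  qed simp
  with ln ln_I xn_ln show "\<exists>ln. (\<forall>n. ln n \<in> Lambda_set) \<and>
      (\<lambda>n. supn (\<lambda>t. ln n t - t)) \<longlonglongrightarrow> 0 \<and>
      (\<lambda>n. supn (\<lambda>t. xn n (ln n t) - x t)) \<longlonglongrightarrow> 0 \<and>
      (\<lambda>n. supn (\<lambda>t. \<Psi> (xn n) (ln n t) - \<Psi> x t)) \<longlonglongrightarrow> 0"
    by blast
qed

lemma admissible_op_id: "admissible_op (\<lambda>x. x) 1"
  by (rule admissible_opI) (simp_all add: abs_diff_le_supn)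

lemma admissible_op_comp:
  assumes \<Psi>: "admissible_op \<Psi> L1" and \<Phi>: "admissible_op \<Phi> L2"
  shows "admissible_op (\<lambda>x. \<Psi> (\<Phi> x)) (L1 * L2)"
proof (rule admissible_opI)
  show "0 \<le> L1 * L2" using admissible_op_nonneg[OF \<Psi>] admissible_op_nonneg[OF \<Phi>] by simp
  show "\<Psi> (\<Phi> x) \<in> Dsp" if "x \<in> Dsp" for x
    using admissible_op_Dsp[OF \<Psi> admissible_op_Dsp[OF \<Phi> that]] .
next
  fix x y :: "real \<Rightarrow> real" and t :: real assume x: "x \<in> Dsp" and y: "y \<in> Dsp" and t: "t \<in> {0..1}"
  have "\<bar>\<Psi> (\<Phi> x) t - \<Psi> (\<Phi> y) t\<bar> \<le> L1 * supn (\<lambda>t. \<Phi> x t - \<Phi> y t)"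
    using admissible_op_lipschitz[OF \<Psi> admissible_op_Dsp[OF \<Phi> x] admissible_op_Dsp[OF \<Phi> y] t] .
  also have "\<dots> \<le> L1 * (L2 * supn (\<lambda>t. x t - y t))"
    using admissible_op_supn_le[OF \<Phi> x y] admissible_op_nonneg[OF \<Psi>] by (rule mult_left_mono)
  finally show "\<bar>\<Psi> (\<Phi> x) t - \<Psi> (\<Phi> y) t\<bar> \<le> L1 * L2 * supn (\<lambda>t. x t - y t)"
    by (simp add: mult.assoc)
next
  fix f g :: "real \<Rightarrow> real" and t :: real
  assume fg: "\<And>s. s \<in> {0..1} \<Longrightarrow> f s = g s" and t: "t \<in> {0..1}"
  show "\<Psi> (\<Phi> f) t = \<Psi> (\<Phi> g) t"
    by (rule admissible_op_cong[OF \<Psi> admissible_op_cong[OF \<Phi> fg] t])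
next
  fix x l :: "real \<Rightarrow> real" and t :: real assume x: "x \<in> Dsp" and l: "l \<in> Lambda_set" and t: "t \<in> {0..1}"
  have "\<Psi> (\<Phi> x) (l t) = \<Psi> (\<Phi> x \<circ> l) t"
    using admissible_op_comp_Lambda[OF \<Psi> admissible_op_Dsp[OF \<Phi> x] l t] .
  also have "\<dots> = \<Psi> (\<Phi> (x \<circ> l)) t"
    by (rule admissible_op_cong[OF \<Psi> _ t]) (simp add: admissible_op_comp_Lambda[OF \<Phi> x l])
  finally show "\<Psi> (\<Phi> x) (l t) = \<Psi> (\<Phi> (x \<circ> l)) t" .
qed

lemma admissible_op_funpow: "admissible_op f L \<Longrightarrow> admissible_op (f ^^ n) (L ^ n)"
proof (induction n)
  case 0
  then show ?case using admissible_op_id by (simp add: id_def)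
next
  case (Suc n)
  then show ?case using admissible_op_comp[OF Suc.prems Suc.IH] by (simp add: o_def)
qed

lemma admissible_op_uminus: "admissible_op (\<lambda>x t. - x t) 1"
proof (rule admissible_opI)
  show "\<bar>- x t - - y t\<bar> \<le> 1 * supn (\<lambda>t. x t - y t)" if "x \<in> Dsp" "y \<in> Dsp" "t \<in> {0..1}" for x y t
    using abs_diff_le_supn[OF that] by linarith
qed (simp_all add: Dsp_uminus)

lemma admissible_op_diff_self:
  assumes \<Psi>: "admissible_op \<Psi> L"
  shows "admissible_op (\<lambda>x t. x t - \<Psi> x t) (1 + L)"
proof (rule admissible_opI)
  show "0 \<le> 1 + L" using admissible_op_nonneg[OF \<Psi>] by simp
  show "(\<lambda>t. x t - \<Psi> x t) \<in> Dsp" if "x \<in> Dsp" for x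
    using Dsp_diff[OF that admissible_op_Dsp[OF \<Psi> that]] .
  show "\<bar>(x t - \<Psi> x t) - (y t - \<Psi> y t)\<bar> \<le> (1 + L) * supn (\<lambda>t. x t - y t)"
    if "x \<in> Dsp" "y \<in> Dsp" "t \<in> {0..1}" for x y t
    using admissible_op_lipschitz[OF \<Psi> that] abs_diff_le_supn[OF that] by (simp add: algebra_simps)
  show "f t - \<Psi> f t = g t - \<Psi> g t" if "\<And>s. s \<in> {0..1} \<Longrightarrow> f s = g s" "t \<in> {0..1}" for f g t
    using that admissible_op_cong[OF \<Psi> that] by simp
  show "x (l t) - \<Psi> x (l t) = (x \<circ> l) t - \<Psi> (x \<circ> l) t"
    if "x \<in> Dsp" "l \<in> Lambda_set" "t \<in> {0..1}" for x l t
    using admissible_op_comp_Lambda[OF \<Psi> that] by simp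
qed

lemma admissible_op_add_self:
  assumes \<Psi>: "admissible_op \<Psi> L"
  shows "admissible_op (\<lambda>x t. x t + \<Psi> x t) (1 + L)"
proof (rule admissible_opI)
  show "0 \<le> 1 + L" using admissible_op_nonneg[OF \<Psi>] by simp
  show "(\<lambda>t. x t + \<Psi> x t) \<in> Dsp" if "x \<in> Dsp" for x
    using Dsp_add[OF that admissible_op_Dsp[OF \<Psi> that]] .
  show "\<bar>(x t + \<Psi> x t) - (y t + \<Psi> y t)\<bar> \<le> (1 + L) * supn (\<lambda>t. x t - y t)"
    if "x \<in> Dsp" "y \<in> Dsp" "t \<in> {0..1}" for x y t
    using admissible_op_lipschitz[OF \<Psi> that] abs_diff_le_supn[OF that] by (simp add: algebra_simps)
  show "f t + \<Psi> f t = g t + \<Psi> g t" if "\<And>s. s \<in> {0..1} \<Longrightarrow> f s = g s" "t \<in> {0..1}" for f g t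
    using that admissible_op_cong[OF \<Psi> that] by simp
  show "x (l t) + \<Psi> x (l t) = (x \<circ> l) t + \<Psi> (x \<circ> l) t"
    if "x \<in> Dsp" "l \<in> Lambda_set" "t \<in> {0..1}" for x l t
    using admissible_op_comp_Lambda[OF \<Psi> that] by simp
qed

text \<open>The functional \<open>G x\<close> need not be cadlag (\<open>jump x\<close> is not); the one-sided condition
  at the right of each point is what makes its running supremum right-continuous.\<close>
lemma admissible_op_Ssup_comp:
  assumes L: "0 \<le> L"
    and bdd: "\<And>x. x \<in> Dsp \<Longrightarrow> bdd_above (G x ` {0..1})"
    and right: "\<And>x t e. x \<in> Dsp \<Longrightarrow> 0 \<le> t \<Longrightarrow> t < 1 \<Longrightarrow> 0 < e \<Longrightarrow>
        eventually (\<lambda>s. G x s \<le> Ssup (G x) t + e) (at_right t)"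
    and lip: "\<And>x y s. x \<in> Dsp \<Longrightarrow> y \<in> Dsp \<Longrightarrow> s \<in> {0..1} \<Longrightarrow>
        \<bar>G x s - G y s\<bar> \<le> L * supn (\<lambda>t. x t - y t)"
    and cong: "\<And>f g s. (\<And>t. t \<in> {0..1} \<Longrightarrow> f t = g t) \<Longrightarrow> s \<in> {0..1} \<Longrightarrow> G f s = G g s"
    and comp: "\<And>x l s. x \<in> Dsp \<Longrightarrow> l \<in> Lambda_set \<Longrightarrow> s \<in> {0..1} \<Longrightarrow> G x (l s) = G (x \<circ> l) s"
  shows "admissible_op (\<lambda>x. Ssup (G x)) L"
proof (rule admissible_opI)
  show "Ssup (G x) \<in> Dsp" if "x \<in> Dsp" for x
    using bdd[OF that] right[OF that] by (rule Ssup_in_Dsp)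
  show "\<bar>Ssup (G x) t - Ssup (G y) t\<bar> \<le> L * supn (\<lambda>t. x t - y t)"
    if x: "x \<in> Dsp" and y: "y \<in> Dsp" and t: "t \<in> {0..1}" for x y t
    by (rule Ssup_dist_le[OF bdd[OF x] bdd[OF y] t]) (use lip[OF x y] t in auto)
  show "Ssup (G f) t = Ssup (G g) t" if "\<And>s. s \<in> {0..1} \<Longrightarrow> f s = g s" "t \<in> {0..1}" for f g t
    by (rule Ssup_cong[OF cong[OF that(1)] that(2)])
  show "Ssup (G x) (l t) = Ssup (G (x \<circ> l)) t"
    if x: "x \<in> Dsp" and l: "l \<in> Lambda_set" and t: "t \<in> {0..1}" for x l t
  proof -
    have "Ssup (G x) (l t) = Ssup (G x \<circ> l) t" by (rule Ssup_comp_Lambda[OF l t])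
    also have "\<dots> = Ssup (G (x \<circ> l)) t" by (rule Ssup_cong[OF _ t]) (simp add: comp[OF x l])
    finally show ?thesis .
  qed
qed (rule L)

lemma admissible_op_Ssup: "admissible_op Ssup 1"
  by (rule admissible_op_Ssup_comp[where G = "\<lambda>x. x", OF _ Dsp_bdd_above Dsp_eventually_le_Ssup_at_right])
    (simp_all add: abs_diff_le_supn)

lemma admissible_op_Sabs: "admissible_op Sabs 1"
  unfolding Sabs_def[abs_def] Ssup_def[symmetric]
proof (rule admissible_op_Ssup_comp[where G = "\<lambda>x s. \<bar>x s\<bar>" and L = 1,
      OF _ Dsp_bdd_above[OF Dsp_abs] Dsp_eventually_le_Ssup_at_right[OF Dsp_abs]])
  show "\<bar>\<bar>x s\<bar> - \<bar>y s\<bar>\<bar> \<le> 1 * supn (\<lambda>t. x t - y t)" if "x \<in> Dsp" "y \<in> Dsp" "s \<in> {0..1}" for x y s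
    using abs_diff_le_supn[OF that] by linarith
qed simp_all

lemma admissible_op_Sdelta: "admissible_op Sdelta 2"
  unfolding Sdelta_def[abs_def] Ssup_def[symmetric]
proof (rule admissible_op_Ssup_comp[where G = jump,
      OF _ bdd_above_jump _ jump_lipschitz jump_cong jump_comp_Lambda[symmetric]])
  fix x :: "real \<Rightarrow> real" and t e :: real assume x: "x \<in> Dsp" and t: "0 \<le> t" "t < 1" and e: "0 < e"
  have "0 \<le> Ssup (jump x) t"
    using Ssup_upper[OF bdd_above_jump[OF x], of 0 t] t by simp
  then show "eventually (\<lambda>s. jump x s \<le> Ssup (jump x) t + e) (at_right t)"
    by (intro eventually_mono[OF jump_eventually_small_at_right[OF x t e]]) (simp add: abs_le_iff)
qed simp

lemma admissible_op_Sdelta_abs: "admissible_op Sdelta_abs 2"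
  unfolding Sdelta_abs_def[abs_def] Ssup_def[symmetric]
proof (rule admissible_op_Ssup_comp[where G = "\<lambda>x s. \<bar>jump x s\<bar>" and L = 2, OF _ bdd_above_abs_jump])
  fix x :: "real \<Rightarrow> real" and t e :: real assume x: "x \<in> Dsp" and t: "0 \<le> t" "t < 1" and e: "0 < e"
  have "0 \<le> Ssup (\<lambda>s. \<bar>jump x s\<bar>) t"
    using Ssup_upper[OF bdd_above_abs_jump[OF x], of 0 t] t by simp
  then show "eventually (\<lambda>s. \<bar>jump x s\<bar> \<le> Ssup (\<lambda>s. \<bar>jump x s\<bar>) t + e) (at_right t)"
    by (intro eventually_mono[OF jump_eventually_small_at_right[OF x t e]]) simp
next
  show "\<bar>\<bar>jump x s\<bar> - \<bar>jump y s\<bar>\<bar> \<le> 2 * supn (\<lambda>t. x t - y t)" if "x \<in> Dsp" "y \<in> Dsp" "s \<in> {0..1}" for x y s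
    using jump_lipschitz[OF that] by linarith
  show "\<bar>jump f s\<bar> = \<bar>jump g s\<bar>" if "\<And>t. t \<in> {0..1} \<Longrightarrow> f t = g t" "s \<in> {0..1}" for f g s
    using jump_cong[OF that] by simp
  show "\<bar>jump x (l s)\<bar> = \<bar>jump (x \<circ> l) s\<bar>" if "x \<in> Dsp" "l \<in> Lambda_set" "s \<in> {0..1}" for x l s
    using jump_comp_Lambda[OF that] by simp
qed simp

lemma admissible_op_Sdelta_pm: "admissible_op (Sdelta_pm pos) 2"
proof (cases pos)
  case True
  then have "Sdelta_pm pos = Sdelta" by (simp add: Sdelta_pm_def fun_eq_iff)
  then show ?thesis using admissible_op_Sdelta by simp
next
  case False
  then have "Sdelta_pm pos = (\<lambda>x. Sdelta ((\<lambda>x t. - x t) x))"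
    by (simp add: Sdelta_pm_def fun_eq_iff)
  then show ?thesis using admissible_op_comp[OF admissible_op_Sdelta admissible_op_uminus] by simp
qed

lemma admissible_op_Trim1: "admissible_op (Trim1 pos) 3"
proof (cases pos)
  case True
  then have "Trim1 pos = (\<lambda>x t. x t - Sdelta_pm True x t)" by (simp add: Trim1_def fun_eq_iff)
  then show ?thesis using admissible_op_diff_self[OF admissible_op_Sdelta_pm] by simp
next
  case False
  then have "Trim1 pos = (\<lambda>x t. x t + Sdelta_pm False x t)" by (simp add: Trim1_def fun_eq_iff)
  then show ?thesis using admissible_op_add_self[OF admissible_op_Sdelta_pm] by simp
qed

lemma admissible_op_Trim: "admissible_op (Trim r pos) (3 ^ r)"
  unfolding Trim_def by (rule admissible_op_funpow[OF admissible_op_Trim1])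

lemma admissible_op_Sdelta_r: "admissible_op (Sdelta_r r pos) (2 * 3 ^ (r - 1))"
  unfolding Sdelta_r_def[abs_def] by (rule admissible_op_comp[OF admissible_op_Sdelta_pm admissible_op_Trim])

lemma admissible_op_Trim_rs: "admissible_op (Trim_rs r s) (3 ^ r * 3 ^ s)"
  unfolding Trim_rs_def[abs_def] by (rule admissible_op_comp[OF admissible_op_Trim admissible_op_Trim])

lemma admissible_op_Trim_tilde1: "admissible_op Trim_tilde1 3"
  unfolding Trim_tilde1_def[abs_def] using admissible_op_diff_self[OF admissible_op_Sdelta_abs] by simp

lemma admissible_op_Trim_tilde: "admissible_op (Trim_tilde r) (3 ^ r)"
  unfolding Trim_tilde_def by (rule admissible_op_funpow[OF admissible_op_Trim_tilde1])

lemma admissible_op_Sdelta_tilde_r: "admissible_op (Sdelta_tilde_r r) (2 * 3 ^ (r - 1))"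
  unfolding Sdelta_tilde_r_def[abs_def]
  by (rule admissible_op_comp[OF admissible_op_Sdelta_abs admissible_op_Trim_tilde])

theorem proposition2p2:
  fixes r s :: nat and \<Psi> :: "(real \<Rightarrow> real) \<Rightarrow> (real \<Rightarrow> real)"
  assumes "r \<ge> 1" and "s \<ge> 1" and "\<Psi> \<in> operators r s"
  shows "(\<forall>x\<in>Dsp. \<Psi> x \<in> Dsp) \<and> norm_Lipschitz \<Psi> \<and> Lambda_compatible \<Psi> \<and>
         (\<forall>x\<in>Dsp. jointly_J1_continuous_at \<Psi> x)"
proof -
  obtain L where \<Psi>: "admissible_op \<Psi> L"
    using assms(3) admissible_op_Ssup admissible_op_Sabs admissible_op_Sdelta_pm admissible_op_Sdelta_abs
      admissible_op_Trim admissible_op_Sdelta_r admissible_op_Trim_rs admissible_op_Trim_tilde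
      admissible_op_Sdelta_tilde_r
    unfolding operators_def by blast
  then show ?thesis
    using admissible_op_Dsp admissible_op_norm_Lipschitz admissible_op_Lambda_compatible
      admissible_op_jointly_J1_continuous_at by blast
qed

end
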